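(* Let $A\in M_n(\mathbb{R})$ be nilpotent and let $\epsilon>0$. Then for every multiset $\Lambda=\{\lambda_1,\ldots,\lambda_n\}$ of complex numbers that is invariant under complex conjugation and satisfies $\sum_{i=1}^n|\lambda_i|^2<\epsilon^2$, there exists $M\in M_n(\mathbb{R})$ with $\|M-A\|<\epsilon$ and $\operatorname{spec}(M)=\Lambda$.
   Context: $M_n(\mathbb{R})$ is the set of real $n\times n$ matrices, $\|\cdot\|$ the Frobenius norm, and $\operatorname{spec}$ the spectrum as a multiset. *)

theory Defs
  imports "Jordan_Normal_Form.Char_Poly"
begin

definition nilpotent_mat :: "'a :: comm_ring_1 mat \<Rightarrow> bool" where
  "nilpotent_mat A \<longleftrightarrow> A \<in> carrier_mat (dim_row A) (dim_row A) \<and>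
     (\<exists>k. A ^\<^sub>m k = 0\<^sub>m (dim_row A) (dim_row A))"

definition frob_norm :: "real mat \<Rightarrow> real" where
  "frob_norm M = sqrt (\<Sum>i<dim_row M. \<Sum>j<dim_col M. (M $$ (i,j))^2)"

definition has_spectrum :: "real mat \<Rightarrow> complex multiset \<Rightarrow> bool" where
  "has_spectrum M \<Lambda> \<longleftrightarrow>
     char_poly (map_mat complex_of_real M) = (\<Prod>a\<in>#\<Lambda>. [:- a, 1:])"

end

theory Submission
  imports Defs "Jordan_Normal_Form.Schur_Decomposition"
begin

(*
  A nilpotent real matrix is orthogonally similar to a strictly upper triangular matrix T
  (a Schur form with all eigenvalues 0). Being closed under conjugation, \<Lambda> splits into real
  eigenvalues and conjugate pairs, which are placed on consecutive diagonal blocks of T + E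
  with E block diagonal: a real eigenvalue a becomes the 1 \<times> 1 block (a), and a pair a \<plusminus> ib
  turns the 2 \<times> 2 block [[0, t], [0, 0]] of T into [[a, s], [-b\<^sup>2/s, a]], where s can be chosen
  so that this block of E has squared norm at most 2(a\<^sup>2 + b\<^sup>2). Since T + E is block upper
  triangular, its spectrum is the union of those of its diagonal blocks, while
  \<parallel>E\<parallel>\<^sup>2 \<le> \<Sum>|\<lambda>\<^sub>i|\<^sup>2 < \<epsilon>\<^sup>2. Conjugating back by the orthogonal matrix preserves the Frobenius norm.
*)

section \<open>Orthogonal matrices\<close>

definition orthogonal_mat :: "'a :: comm_ring_1 mat \<Rightarrow> nat \<Rightarrow> bool" where
  "orthogonal_mat Q n \<longleftrightarrow>
     Q \<in> carrier_mat n n \<and> transpose_mat Q * Q = 1\<^sub>m n \<and> Q * transpose_mat Q = 1\<^sub>m n"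

lemma orthogonal_matI:
  fixes Q :: "'a :: field mat"
  assumes Q: "Q \<in> carrier_mat n n" and QtQ: "transpose_mat Q * Q = 1\<^sub>m n"
  shows "orthogonal_mat Q n"
  using mat_mult_left_right_inverse[OF _ Q QtQ] Q QtQ unfolding orthogonal_mat_def by auto

lemma orthogonal_mat_transpose: "orthogonal_mat Q n \<Longrightarrow> orthogonal_mat (transpose_mat Q) n"
  unfolding orthogonal_mat_def by auto

lemma orthogonal_mat_one: "orthogonal_mat (1\<^sub>m n) n"
  unfolding orthogonal_mat_def by auto

lemma orthogonal_mat_mult:
  fixes P Q :: "'a :: field mat"
  assumes P: "orthogonal_mat P n" and Q: "orthogonal_mat Q n"
  shows "orthogonal_mat (P * Q) n"
proof (rule orthogonal_matI)
  have carr: "P \<in> carrier_mat n n" "Q \<in> carrier_mat n n"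
    using P Q unfolding orthogonal_mat_def by auto
  have "transpose_mat (P * Q) * (P * Q) = transpose_mat Q * (transpose_mat P * P) * Q"
    using carr by (simp add: transpose_mult assoc_mult_mat[of _ n n _ n _ n])
  then show "transpose_mat (P * Q) * (P * Q) = 1\<^sub>m n"
    using P Q carr unfolding orthogonal_mat_def by simp
qed (use P Q in \<open>auto simp: orthogonal_mat_def\<close>)

lemma orthogonal_mat_block_diag:
  fixes P Q :: "'a :: field mat"
  assumes P: "orthogonal_mat P k" and Q: "orthogonal_mat Q m"
  shows "orthogonal_mat (four_block_mat P (0\<^sub>m k m) (0\<^sub>m m k) Q) (k + m)"
proof (rule orthogonal_matI)
  have carr: "P \<in> carrier_mat k k" "Q \<in> carrier_mat m m"
    using P Q unfolding orthogonal_mat_def by auto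
  then have "transpose_mat (four_block_mat P (0\<^sub>m k m) (0\<^sub>m m k) Q) =
      four_block_mat (transpose_mat P) (0\<^sub>m k m) (0\<^sub>m m k) (transpose_mat Q)"
    by (subst transpose_four_block_mat) auto
  then show "transpose_mat (four_block_mat P (0\<^sub>m k m) (0\<^sub>m m k) Q) *
      four_block_mat P (0\<^sub>m k m) (0\<^sub>m m k) Q = 1\<^sub>m (k + m)"
    using P Q carr unfolding orthogonal_mat_def
    by (simp add: mult_four_block_mat[of _ k k _ m _ m _ _ k _ m])
qed (use P Q in \<open>auto simp: orthogonal_mat_def\<close>)

lemma orthogonal_conj_inverse:
  assumes Q: "orthogonal_mat Q n" and A: "A \<in> carrier_mat n n"
  shows "Q * (transpose_mat Q * A * Q) * transpose_mat Q = A"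
proof -
  have Q': "Q \<in> carrier_mat n n" "transpose_mat Q \<in> carrier_mat n n"
    using Q unfolding orthogonal_mat_def by auto
  have "Q * (transpose_mat Q * A * Q) * transpose_mat Q =
      (Q * transpose_mat Q) * A * (Q * transpose_mat Q)"
    using Q' A by (simp add: assoc_mult_mat[of _ n n _ n _ n])
  then show ?thesis using Q A unfolding orthogonal_mat_def by simp
qed

lemma orthogonal_conj_perturbation:
  assumes Q: "orthogonal_mat Q n" and A: "A \<in> carrier_mat n n" and E: "E \<in> carrier_mat n n"
  shows "Q * (transpose_mat Q * A * Q + E) * transpose_mat Q - A = Q * E * transpose_mat Q"
proof -
  have Q': "Q \<in> carrier_mat n n" using Q unfolding orthogonal_mat_def by auto
  have T: "transpose_mat Q * A * Q \<in> carrier_mat n n" using Q' A by auto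
  have "Q * (transpose_mat Q * A * Q + E) * transpose_mat Q =
      (Q * (transpose_mat Q * A * Q) + Q * E) * transpose_mat Q"
    by (simp only: mult_add_distrib_mat[OF Q' T E])
  also have "\<dots> = Q * (transpose_mat Q * A * Q) * transpose_mat Q + Q * E * transpose_mat Q"
    by (rule add_mult_distrib_mat[of _ n n _ _ n]) (use Q' T E in auto)
  also have "Q * (transpose_mat Q * A * Q) * transpose_mat Q = A"
    by (rule orthogonal_conj_inverse[OF Q A])
  finally show ?thesis using Q' A E by (auto intro!: eq_matI)
qed

lemma transpose_mult_conj:
  fixes A :: "'a :: comm_semiring_1 mat"
  assumes "A \<in> carrier_mat n n" "P \<in> carrier_mat n n" "Q \<in> carrier_mat n n"
  shows "transpose_mat (P * Q) * A * (P * Q) = transpose_mat Q * (transpose_mat P * A * P) * Q"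
proof -
  have "transpose_mat (P * Q) = transpose_mat Q * transpose_mat P"
    using transpose_mult[OF assms(2,3)] .
  then show ?thesis using assms by (simp add: assoc_mult_mat[of _ n n _ n _ n])
qed

lemma char_poly_orthogonal_conj:
  assumes Q: "orthogonal_mat Q n" and A: "A \<in> carrier_mat n n"
  shows "char_poly (transpose_mat Q * A * Q) = char_poly A"
proof -
  have Q': "Q \<in> carrier_mat n n" "transpose_mat Q \<in> carrier_mat n n"
    and QQt: "Q * transpose_mat Q = 1\<^sub>m n" and QtQ: "transpose_mat Q * Q = 1\<^sub>m n"
    using Q unfolding orthogonal_mat_def by auto
  have "similar_mat_wit A (transpose_mat Q * A * Q) Q (transpose_mat Q)"
    by (rule similar_mat_witI[OF QQt QtQ orthogonal_conj_inverse[OF Q A, symmetric] A _ Q'])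
      (use Q' A in simp)
  then have "similar_mat A (transpose_mat Q * A * Q)" unfolding similar_mat_def by blast
  then show ?thesis by (rule char_poly_similar[symmetric])
qed

lemma block_diag_conj_four_block:
  assumes P: "P \<in> carrier_mat k k" and Q: "Q \<in> carrier_mat m m"
    and B1: "B1 \<in> carrier_mat k k" and B2: "B2 \<in> carrier_mat k m" and B4: "B4 \<in> carrier_mat m m"
  shows "transpose_mat (four_block_mat P (0\<^sub>m k m) (0\<^sub>m m k) Q) * four_block_mat B1 B2 (0\<^sub>m m k) B4
      * four_block_mat P (0\<^sub>m k m) (0\<^sub>m m k) Q =
    four_block_mat (transpose_mat P * B1 * P) (transpose_mat P * B2 * Q) (0\<^sub>m m k)
      (transpose_mat Q * B4 * Q)"
proof -
  have "transpose_mat (four_block_mat P (0\<^sub>m k m) (0\<^sub>m m k) Q) =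
      four_block_mat (transpose_mat P) (0\<^sub>m k m) (0\<^sub>m m k) (transpose_mat Q)"
    using P Q by (subst transpose_four_block_mat) auto
  also have "\<dots> * four_block_mat B1 B2 (0\<^sub>m m k) B4 =
      four_block_mat (transpose_mat P * B1) (transpose_mat P * B2) (0\<^sub>m m k) (transpose_mat Q * B4)"
    using P Q B1 B2 B4 by (subst mult_four_block_mat[of _ k k _ m _ m _ _ k _ m]) auto
  also have "\<dots> * four_block_mat P (0\<^sub>m k m) (0\<^sub>m m k) Q =
      four_block_mat (transpose_mat P * B1 * P) (transpose_mat P * B2 * Q) (0\<^sub>m m k)
        (transpose_mat Q * B4 * Q)"
    using P Q B1 B2 B4 by (subst mult_four_block_mat[of _ k k _ m _ m _ _ k _ m]) auto
  finally show ?thesis .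
qed

lemma orthogonal_mat_of_normalized_cols:
  fixes ws :: "real vec list"
  assumes ws: "set ws \<subseteq> carrier_vec n" and orth: "corthogonal ws" and len: "length ws = n"
  shows "orthogonal_mat (mat_of_cols n (map (\<lambda>w. (1 / sqrt (w \<bullet> w)) \<cdot>\<^sub>v w) ws)) n"
    (is "orthogonal_mat ?Q n")
proof (rule orthogonal_matI)
  show Q: "?Q \<in> carrier_mat n n" unfolding carrier_mat_def using len by simp
  have wsi: "ws ! i \<in> carrier_vec n" if "i < n" for i using ws len that by auto
  have pos: "ws ! i \<bullet> ws ! i > 0" if i: "i < n" for i
  proof -
    have "ws ! i \<bullet> ws ! i \<noteq> 0" using corthogonalD[OF orth, of i i] i len by auto
    moreover have "ws ! i \<bullet> ws ! i \<ge> 0"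
      using wsi[OF i] by (auto simp: scalar_prod_def intro!: sum_nonneg)
    ultimately show ?thesis by linarith
  qed
  show "transpose_mat ?Q * ?Q = 1\<^sub>m n"
  proof (rule eq_matI)
    fix i j assume "i < dim_row (1\<^sub>m n :: real mat)" "j < dim_col (1\<^sub>m n :: real mat)"
    then have i: "i < n" and j: "j < n" by auto
    have "(transpose_mat ?Q * ?Q) $$ (i, j) = col ?Q i \<bullet> col ?Q j"
      using Q i j by auto
    also have "\<dots> = (1 / sqrt (ws ! i \<bullet> ws ! i)) * (1 / sqrt (ws ! j \<bullet> ws ! j)) * (ws ! i \<bullet> ws ! j)"
      using i j len wsi[OF i] wsi[OF j]
      by (simp add: scalar_prod_smult_distrib smult_scalar_prod_distrib)
    also have "\<dots> = 1\<^sub>m n $$ (i, j)"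
      using corthogonalD[OF orth, of i j] pos[OF i] i j len
      by (auto simp: real_sqrt_mult[symmetric])
    finally show "(transpose_mat ?Q * ?Q) $$ (i, j) = 1\<^sub>m n $$ (i, j)" .
  qed (use Q in auto)
qed

lemma orthogonal_mat_first_col:
  fixes v :: "real vec"
  assumes v: "v \<in> carrier_vec n" and v0: "v \<noteq> 0\<^sub>v n"
  shows "\<exists>Q c. orthogonal_mat Q n \<and> col Q 0 = c \<cdot>\<^sub>v v"
proof -
  interpret cof_vec_space n "TYPE(real)" .
  define b where "b = basis_completion v"
  from basis_completion[OF v v0, folded b_def]
  have dist_b: "distinct b" and indep: "\<not> lin_dep (set b)" and b: "set b \<subseteq> carrier_vec n"
    and hd_b: "hd b = v" and len_b: "length b = n" by auto
  have n: "n \<noteq> 0" using v v0 by auto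
  from hd_b len_b n obtain vs where b_v: "b = v # vs" by (cases b) auto
  define ws where "ws = gram_schmidt n b"
  from gram_schmidt_result[OF b dist_b indep refl, folded ws_def]
  have ws: "set ws \<subseteq> carrier_vec n" "corthogonal ws" "length ws = n" by (auto simp: len_b)
  have "ws ! 0 = v"
    using gram_schmidt_hd[OF v, of vs] n ws(3) unfolding ws_def b_v by (metis hd_conv_nth list.size(3))
  then have "col (mat_of_cols n (map (\<lambda>w. (1 / sqrt (w \<bullet> w)) \<cdot>\<^sub>v w) ws)) 0 = (1 / sqrt (v \<bullet> v)) \<cdot>\<^sub>v v"
    using n ws v by (subst col_mat_of_cols) auto
  then show ?thesis using orthogonal_mat_of_normalized_cols[OF ws] by blast
qed

section \<open>The Frobenius norm\<close>

lemma power2_frob_norm: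
  "(frob_norm X)\<^sup>2 = (\<Sum>i<dim_row X. \<Sum>j<dim_col X. (X $$ (i, j))\<^sup>2)"
  unfolding frob_norm_def by (simp add: sum_nonneg)

lemma frob_norm_transpose: "frob_norm (transpose_mat X) = frob_norm X"
  unfolding frob_norm_def by (auto intro: sum.swap)

lemma frob_norm_cols:
  "X \<in> carrier_mat n m \<Longrightarrow> frob_norm X = sqrt (\<Sum>j<m. col X j \<bullet> col X j)"
  unfolding frob_norm_def scalar_prod_def
  by (auto simp: power2_eq_square atLeast0LessThan intro: sum.swap)

lemma frob_norm_orthogonal_mult_left:
  assumes Q: "orthogonal_mat Q n" and X: "X \<in> carrier_mat n m"
  shows "frob_norm (Q * X) = frob_norm X"
proof -
  have Q': "Q \<in> carrier_mat n n" "transpose_mat Q * Q = 1\<^sub>m n"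
    using Q unfolding orthogonal_mat_def by auto
  have "col (Q * X) j \<bullet> col (Q * X) j = col X j \<bullet> col X j" if j: "j < m" for j
  proof -
    have c: "col X j \<in> carrier_vec n" using X j by auto
    have "col (Q * X) j \<bullet> col (Q * X) j = (Q *\<^sub>v col X j) \<bullet> (Q *\<^sub>v col X j)"
      unfolding col_mult2[OF Q'(1) X j] ..
    also have "\<dots> = (transpose_mat Q *\<^sub>v (Q *\<^sub>v col X j)) \<bullet> col X j"
      using Q' c by (subst transpose_vec_mult_scalar) auto
    also have "transpose_mat Q *\<^sub>v (Q *\<^sub>v col X j) = col X j"
      using Q' c by (simp flip: assoc_mult_mat_vec)
    finally show ?thesis .
  qed
  then show ?thesis using Q' X by (simp add: frob_norm_cols[of _ n m])
qed

lemma frob_norm_orthogonal_conj: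
  assumes Q: "orthogonal_mat Q n" and X: "X \<in> carrier_mat n n"
  shows "frob_norm (Q * X * transpose_mat Q) = frob_norm X"
proof -
  have Q': "Q \<in> carrier_mat n n" using Q unfolding orthogonal_mat_def by auto
  have "Q * X * transpose_mat Q = Q * (X * transpose_mat Q)"
    using Q' X by (simp add: assoc_mult_mat[of _ n n _ n _ n])
  then have "frob_norm (Q * X * transpose_mat Q) = frob_norm (X * transpose_mat Q)"
    using frob_norm_orthogonal_mult_left[OF Q, of "X * transpose_mat Q" n] Q' X by simp
  also have "\<dots> = frob_norm (Q * transpose_mat X)"
    using Q' X by (metis frob_norm_transpose transpose_mult transpose_carrier_mat transpose_transpose)
  also have "\<dots> = frob_norm X"
    using X by (simp add: frob_norm_orthogonal_mult_left[OF Q] frob_norm_transpose)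
  finally show ?thesis .
qed

lemma sum_lessThan_add:
  fixes f :: "nat \<Rightarrow> 'a :: comm_monoid_add"
  shows "(\<Sum>i<k + m. f i) = (\<Sum>i<k. f i) + (\<Sum>i<m. f (k + i))"
  by (induction m) (auto simp: add.assoc)

lemma frob_norm_block_diag:
  assumes "E1 \<in> carrier_mat k k" "E4 \<in> carrier_mat m m"
  shows "(frob_norm (four_block_mat E1 (0\<^sub>m k m) (0\<^sub>m m k) E4))\<^sup>2 =
    (frob_norm E1)\<^sup>2 + (frob_norm E4)\<^sup>2"
  using assms unfolding power2_frob_norm by (simp add: sum_lessThan_add sum.distrib)

section \<open>Orthogonal triangularization of nilpotent matrices\<close>

definition strictly_upper_triangular :: "'a :: zero mat \<Rightarrow> bool" where
  "strictly_upper_triangular A \<longleftrightarrow> (\<forall>i < dim_row A. \<forall>j < dim_col A. j \<le> i \<longrightarrow> A $$ (i, j) = 0)"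

lemma strictly_upper_triangular_four_block:
  assumes "B1 \<in> carrier_mat k k" "B2 \<in> carrier_mat k m" "B4 \<in> carrier_mat m m"
    and "strictly_upper_triangular B1" "strictly_upper_triangular B4"
  shows "strictly_upper_triangular (four_block_mat B1 B2 (0\<^sub>m m k) B4)"
  using assms unfolding strictly_upper_triangular_def by auto

lemma strictly_upper_triangular_split_block:
  assumes "B \<in> carrier_mat (k + m) (k + m)" "strictly_upper_triangular B"
    and "split_block B k k = (B1, B2, B3, B4)"
  shows "B3 = 0\<^sub>m m k" "strictly_upper_triangular B1" "strictly_upper_triangular B4"
  using assms unfolding split_block_def Let_def strictly_upper_triangular_def
  by (auto intro!: eq_matI)

lemma char_poly_four_block_lower_left_zero:
  fixes B1 :: "'a :: idom mat"
  assumes B1: "B1 \<in> carrier_mat k k" and B2: "B2 \<in> carrier_mat k m" and B4: "B4 \<in> carrier_mat m m"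
  shows "char_poly (four_block_mat B1 B2 (0\<^sub>m m k) B4) = char_poly B1 * char_poly B4"
proof -
  let ?cm = "\<lambda>A. [:0, 1:] \<cdot>\<^sub>m 1\<^sub>m (dim_row A) + map_mat (\<lambda>a. [:- a:]) A"
  have "?cm (four_block_mat B1 B2 (0\<^sub>m m k) B4) =
      four_block_mat (?cm B1) (map_mat (\<lambda>a. [:- a:]) B2) (0\<^sub>m m k) (?cm B4)"
    using B1 B2 B4 by (auto simp: one_poly_def intro!: eq_matI)
  moreover have "det \<dots> = det (?cm B1) * det (?cm B4)"
    using B1 B2 B4 by (intro det_four_block_mat_lower_left_zero[OF _ _ refl]) auto
  ultimately show ?thesis unfolding char_poly_defs by simp
qed

lemma orthogonal_conj_first_col_zero:
  fixes A :: "'a :: field mat"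
  assumes A: "A \<in> carrier_mat n n" and Q: "orthogonal_mat Q n"
    and v: "v \<in> carrier_vec n" and Av: "A *\<^sub>v v = 0\<^sub>v n" and Qv: "col Q 0 = c \<cdot>\<^sub>v v"
    and i: "i < n"
  shows "(transpose_mat Q * A * Q) $$ (i, 0) = 0"
proof -
  have Q': "Q \<in> carrier_mat n n" using Q unfolding orthogonal_mat_def by auto
  have "(transpose_mat Q * A * Q) $$ (i, 0) = row (transpose_mat Q) i \<bullet> col (A * Q) 0"
    using Q' A i by (simp add: assoc_mult_mat[of _ n n _ n _ n])
  also have "col (A * Q) 0 = A *\<^sub>v (c \<cdot>\<^sub>v v)" using A Q' i Qv by auto
  also have "\<dots> = 0\<^sub>v n" using mult_mat_vec[OF A v] Av by (auto intro!: eq_vecI)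
  finally show ?thesis using Q' i by auto
qed

lemma orthogonal_deflation_zero_eigenvalue:
  fixes A :: "real mat"
  assumes A: "A \<in> carrier_mat (Suc m) (Suc m)" and "eigenvalue A 0"
  shows "\<exists>Q B2 B4. orthogonal_mat Q (Suc m) \<and> B2 \<in> carrier_mat 1 m \<and> B4 \<in> carrier_mat m m \<and>
    transpose_mat Q * A * Q = four_block_mat (0\<^sub>m 1 1) B2 (0\<^sub>m m 1) B4"
proof -
  obtain v where "eigenvector A v 0" using assms(2) unfolding eigenvalue_def by blast
  then have v: "v \<in> carrier_vec (Suc m)" and v0: "v \<noteq> 0\<^sub>v (Suc m)"
    and Av: "A *\<^sub>v v = 0\<^sub>v (Suc m)"
    using A unfolding eigenvector_def by auto
  obtain Q c where Q: "orthogonal_mat Q (Suc m)" and Qv: "col Q 0 = c \<cdot>\<^sub>v v"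
    using orthogonal_mat_first_col[OF v v0] by blast
  define A' where "A' = transpose_mat Q * A * Q"
  have A': "A' \<in> carrier_mat (Suc m) (Suc m)"
    using Q A unfolding A'_def orthogonal_mat_def by auto
  obtain B1 B2 B3 B4 where split: "split_block A' 1 1 = (B1, B2, B3, B4)"
    by (metis prod_cases4)
  have blocks: "B2 \<in> carrier_mat 1 m" "B4 \<in> carrier_mat m m" "A' = four_block_mat B1 B2 B3 B4"
    using split_block[OF split, of m m] A' by auto
  moreover have "B1 = 0\<^sub>m 1 1" and "B3 = 0\<^sub>m m 1"
    using split orthogonal_conj_first_col_zero[OF _ Q v Av Qv] A A'
    unfolding A'_def split_block_def Let_def by (auto intro!: eq_matI)
  ultimately show ?thesis using Q unfolding A'_def by blast
qed

lemma orthogonal_strict_triangularization: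
  fixes A :: "real mat"
  assumes "A \<in> carrier_mat n n" and "char_poly A = [:0, 1:] ^ n"
  shows "\<exists>Q. orthogonal_mat Q n \<and> strictly_upper_triangular (transpose_mat Q * A * Q)"
  using assms
proof (induction n arbitrary: A)
  case 0
  then show ?case
    using orthogonal_mat_one[of 0] by (auto simp: strictly_upper_triangular_def)
next
  case (Suc m)
  note A = Suc.prems(1)
  have "eigenvalue A 0"
    using Suc.prems(2) eigenvalue_root_char_poly[OF A] by simp
  then obtain Q1 B2 B4 where Q1: "orthogonal_mat Q1 (Suc m)"
    and B2: "B2 \<in> carrier_mat 1 m" and B4: "B4 \<in> carrier_mat m m"
    and A1: "transpose_mat Q1 * A * Q1 = four_block_mat (0\<^sub>m 1 1) B2 (0\<^sub>m m 1) B4"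
    using orthogonal_deflation_zero_eigenvalue[OF A] by blast
  have "char_poly (0\<^sub>m 1 1 :: real mat) = [:0, 1:]"
    by (subst char_poly_upper_triangular[of _ 1]) (auto simp: diag_mat_def)
  then have "[:0, 1:] * char_poly B4 = char_poly (transpose_mat Q1 * A * Q1)"
    unfolding A1 using B2 B4 by (simp add: char_poly_four_block_lower_left_zero)
  also have "\<dots> = [:0, 1:] * [:0, 1:] ^ m"
    using Suc.prems(2) char_poly_orthogonal_conj[OF Q1 A] by simp
  finally have "char_poly B4 = [:0, 1:] ^ m" by simp
  then obtain Q4 where Q4: "orthogonal_mat Q4 m"
    and T4: "strictly_upper_triangular (transpose_mat Q4 * B4 * Q4)"
    using Suc.IH B4 by blast
  define D where "D = four_block_mat (1\<^sub>m 1) (0\<^sub>m 1 m) (0\<^sub>m m 1) Q4"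
  have D: "orthogonal_mat D (Suc m)"
    using orthogonal_mat_block_diag[OF orthogonal_mat_one[of 1] Q4] unfolding D_def by simp
  have "transpose_mat (Q1 * D) * A * (Q1 * D) = transpose_mat D * (transpose_mat Q1 * A * Q1) * D"
    by (rule transpose_mult_conj[OF A]) (use Q1 D in \<open>auto simp: orthogonal_mat_def\<close>)
  also have "\<dots> = four_block_mat (0\<^sub>m 1 1) (B2 * Q4) (0\<^sub>m m 1) (transpose_mat Q4 * B4 * Q4)"
    using B2 B4 Q4 unfolding A1 D_def orthogonal_mat_def
    by (simp add: block_diag_conj_four_block)
  finally have conj: "transpose_mat (Q1 * D) * A * (Q1 * D) =
      four_block_mat (0\<^sub>m 1 1) (B2 * Q4) (0\<^sub>m m 1) (transpose_mat Q4 * B4 * Q4)" .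
  have "strictly_upper_triangular (0\<^sub>m 1 1 :: real mat)"
    by (simp add: strictly_upper_triangular_def)
  then have "strictly_upper_triangular (transpose_mat (Q1 * D) * A * (Q1 * D))"
    unfolding conj using B2 B4 Q4 unfolding orthogonal_mat_def
    by (intro strictly_upper_triangular_four_block[OF _ _ _ _ T4]) auto
  then show ?case using orthogonal_mat_mult[OF Q1 D] by auto
qed

lemma nilpotent_mat_eigenvalue:
  fixes A :: "'a :: idom mat"
  assumes nil: "nilpotent_mat A" and ev: "eigenvalue A a"
  shows "a = 0"
proof -
  define n where "n = dim_row A"
  obtain k where A: "A \<in> carrier_mat n n" and Ak: "A ^\<^sub>m k = 0\<^sub>m n n"
    using nil unfolding nilpotent_mat_def n_def by auto
  obtain v where v: "eigenvector A v a" using ev unfolding eigenvalue_def by auto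
  then have vn: "v \<in> carrier_vec n" "v \<noteq> 0\<^sub>v n" unfolding eigenvector_def n_def by auto
  obtain i where i: "i < n" "v $ i \<noteq> 0"
  proof (rule ccontr)
    assume "\<not> thesis"
    then have "v = 0\<^sub>v n" using that vn(1) by (intro eq_vecI) auto
    then show False using vn(2) by simp
  qed
  have "a ^ k * v $ i = (A ^\<^sub>m k *\<^sub>v v) $ i"
    using eigenvector_pow[OF A v] i vn(1) by simp
  also have "\<dots> = 0" unfolding Ak using i vn(1) by simp
  finally show "a = 0" using i by simp
qed

lemma (in comm_ring_hom) nilpotent_mat_hom:
  assumes "nilpotent_mat A"
  shows "nilpotent_mat (map_mat hom A)"
proof -
  define n where "n = dim_row A"
  obtain k where A: "A \<in> carrier_mat n n" and Ak: "A ^\<^sub>m k = 0\<^sub>m n n"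
    using assms unfolding nilpotent_mat_def n_def by auto
  have "map_mat hom A ^\<^sub>m k = map_mat hom (A ^\<^sub>m k)" by (rule mat_hom_pow[OF A, symmetric])
  also have "\<dots> = 0\<^sub>m n n" unfolding Ak by (rule eq_matI) simp_all
  finally show ?thesis using A unfolding nilpotent_mat_def by auto
qed

lemma char_poly_nilpotent_complex:
  fixes A :: "complex mat"
  assumes A: "A \<in> carrier_mat n n" and nil: "nilpotent_mat A"
  shows "char_poly A = [:0, 1:] ^ n"
proof -
  obtain as where cp: "char_poly A = (\<Prod>a\<leftarrow>as. [:- a, 1:])" and len: "length as = n"
    using char_poly_factorized[OF A] by auto
  have "a = 0" if "a \<in> set as" for a
  proof (rule nilpotent_mat_eigenvalue[OF nil])
    show "eigenvalue A a"
      using that unfolding eigenvalue_root_char_poly[OF A] cp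
      by (simp add: poly_prod_list prod_list_zero_iff)
  qed
  then have "as = replicate n 0" using len by (simp add: list_eq_iff_nth_eq)
  then show ?thesis using cp by simp
qed

lemma char_poly_nilpotent:
  fixes A :: "real mat"
  assumes A: "A \<in> carrier_mat n n" and nil: "nilpotent_mat A"
  shows "char_poly A = [:0, 1:] ^ n"
proof -
  interpret of_real_poly: map_poly_inj_idom_hom complex_of_real ..
  have "map_poly complex_of_real (char_poly A) = char_poly (map_mat complex_of_real A)"
    by (rule of_real_hom.char_poly_hom[OF A, symmetric])
  also have "\<dots> = [:0, 1:] ^ n"
    using char_poly_nilpotent_complex[OF _ of_real_hom.nilpotent_mat_hom[OF nil]] A by simp
  also have "\<dots> = map_poly complex_of_real ([:0, 1:] ^ n)" by (simp add: of_real_poly.hom_power)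
  finally show ?thesis by simp
qed

section \<open>Prescribing the spectrum by a small perturbation\<close>

lemma det_1x1: "B \<in> carrier_mat 1 1 \<Longrightarrow> det B = B $$ (0, 0)"
  by (subst det_upper_triangular[of B 1]) (auto simp: diag_mat_def)

lemma det_2x2:
  fixes A :: "'a :: comm_ring_1 mat"
  assumes A: "A \<in> carrier_mat 2 2"
  shows "det A = A $$ (0, 0) * A $$ (1, 1) - A $$ (1, 0) * A $$ (0, 1)"
proof -
  have "det A = (\<Sum>i<2. A $$ (i, 0) * cofactor A i 0)"
    by (rule laplace_expansion_column[OF A]) auto
  also have "\<dots> = A $$ (0, 0) * cofactor A 0 0 + A $$ (1, 0) * cofactor A 1 0"
    by (simp add: numeral_2_eq_2)
  also have "cofactor A 0 0 = A $$ (1, 1)"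
    unfolding cofactor_def using A by (subst det_1x1) (auto simp: mat_delete_def)
  also have "cofactor A 1 0 = - A $$ (0, 1)"
    unfolding cofactor_def using A by (subst det_1x1) (auto simp: mat_delete_def)
  finally show ?thesis by (simp add: algebra_simps)
qed

lemma char_poly_2x2:
  fixes A :: "'a :: comm_ring_1 mat"
  assumes "A \<in> carrier_mat 2 2"
  shows "char_poly A = [:- A $$ (0, 0), 1:] * [:- A $$ (1, 1), 1:] - [:A $$ (1, 0) * A $$ (0, 1):]"
  unfolding char_poly_def using assms by (subst det_2x2) (auto simp: char_poly_matrix_def)

lemma has_spectrum_iff:
  assumes "M \<in> carrier_mat n n"
  shows "has_spectrum M \<Lambda> \<longleftrightarrow> map_poly complex_of_real (char_poly M) = (\<Prod>a\<in>#\<Lambda>. [:- a, 1:])"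
proof -
  have "char_poly (map_mat complex_of_real M) = map_poly complex_of_real (char_poly M)"
    by (rule of_real_hom.char_poly_hom[OF assms])
  then show ?thesis unfolding has_spectrum_def by simp
qed

lemma has_spectrum_four_block:
  assumes B1: "B1 \<in> carrier_mat k k" and B2: "B2 \<in> carrier_mat k m" and B4: "B4 \<in> carrier_mat m m"
    and "has_spectrum B1 L1" and "has_spectrum B4 L4"
  shows "has_spectrum (four_block_mat B1 B2 (0\<^sub>m m k) B4) (L1 + L4)"
proof -
  interpret of_real_poly: map_poly_comm_ring_hom complex_of_real ..
  have B: "four_block_mat B1 B2 (0\<^sub>m m k) B4 \<in> carrier_mat (k + m) (k + m)" using B1 B4 by auto
  show ?thesis
    unfolding has_spectrum_iff[OF B]
    using assms(4,5) B1 B2 B4 unfolding has_spectrum_iff[OF B1] has_spectrum_iff[OF B4]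
    by (simp add: char_poly_four_block_lower_left_zero of_real_poly.hom_mult)
qed

lemma has_spectrum_orthogonal_conj:
  assumes Q: "orthogonal_mat Q n" and M: "M \<in> carrier_mat n n" and "has_spectrum M \<Lambda>"
  shows "has_spectrum (Q * M * transpose_mat Q) \<Lambda>"
proof -
  have "char_poly (Q * M * transpose_mat Q) = char_poly M"
    using char_poly_orthogonal_conj[OF orthogonal_mat_transpose[OF Q] M] by simp
  moreover have "Q * M * transpose_mat Q \<in> carrier_mat n n"
    using Q M unfolding orthogonal_mat_def by auto
  ultimately show ?thesis using assms(3) has_spectrum_iff[OF M] has_spectrum_iff by metis
qed

definition spectrum_attainable :: "nat \<Rightarrow> real \<Rightarrow> complex multiset \<Rightarrow> bool" where
  "spectrum_attainable n r \<Lambda> \<longleftrightarrow>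
     (\<forall>B \<in> carrier_mat n n. strictly_upper_triangular B \<longrightarrow>
        (\<exists>E \<in> carrier_mat n n. (frob_norm E)\<^sup>2 \<le> r \<and> has_spectrum (B + E) \<Lambda>))"

lemma spectrum_attainableD:
  assumes "spectrum_attainable n r \<Lambda>" and "B \<in> carrier_mat n n" and "strictly_upper_triangular B"
  obtains E where "E \<in> carrier_mat n n" "(frob_norm E)\<^sup>2 \<le> r" "has_spectrum (B + E) \<Lambda>"
  using assms unfolding spectrum_attainable_def by blast

lemma spectrum_attainable_empty: "spectrum_attainable 0 0 {#}"
proof -
  have "has_spectrum (B + 0\<^sub>m 0 0) {#}" if "B \<in> carrier_mat 0 0" for B
    using that unfolding has_spectrum_def
    by (subst char_poly_upper_triangular[of _ 0]) (auto simp: diag_mat_def)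
  then show ?thesis unfolding spectrum_attainable_def
    by (auto simp: power2_frob_norm intro!: bexI[of _ "0\<^sub>m 0 0"])
qed

lemma spectrum_attainable_real:
  assumes l: "Im l = 0"
  shows "spectrum_attainable 1 ((cmod l)\<^sup>2) {#l#}"
  unfolding spectrum_attainable_def
proof (intro ballI impI)
  fix B :: "real mat" assume B: "B \<in> carrier_mat 1 1" and T: "strictly_upper_triangular B"
  define E where "E = mat 1 1 (\<lambda>_. Re l)"
  have BE: "map_mat complex_of_real (B + E) = mat 1 1 (\<lambda>_. l)"
    using B T l unfolding E_def strictly_upper_triangular_def by (auto simp: complex_eq_iff)
  have "has_spectrum (B + E) {#l#}"
    unfolding has_spectrum_def BE
    by (subst char_poly_upper_triangular[of _ 1]) (auto simp: diag_mat_def)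
  moreover have "(frob_norm E)\<^sup>2 = (cmod l)\<^sup>2"
    using l by (simp add: power2_frob_norm E_def cmod_def)
  ultimately show "\<exists>E \<in> carrier_mat 1 1. (frob_norm E)\<^sup>2 \<le> (cmod l)\<^sup>2 \<and> has_spectrum (B + E) {#l#}"
    by (intro bexI[of _ E]) (auto simp: E_def)
qed

lemma off_diagonal_entry_choice:
  fixes t b :: real
  assumes b: "b \<noteq> 0"
  shows "\<exists>s. s \<noteq> 0 \<and> (s - t)\<^sup>2 + (b\<^sup>2 / s)\<^sup>2 \<le> 2 * b\<^sup>2"
proof (cases "\<bar>b\<bar> \<le> \<bar>t\<bar>")
  case True
  have t: "t \<noteq> 0" using True b by auto
  have "b\<^sup>2 \<le> t\<^sup>2" using True by (metis abs_le_square_iff)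
  then have "b\<^sup>2 / t\<^sup>2 \<le> 1" using t by simp
  then have "(b\<^sup>2 / t)\<^sup>2 \<le> b\<^sup>2"
    using mult_left_mono[of "b\<^sup>2 / t\<^sup>2" 1 "b\<^sup>2"] by (simp add: power2_eq_square)
  then show ?thesis using t by (intro exI[of _ t]) (auto intro: order_trans)
next
  case False
  define s where "s = (if 0 \<le> t then \<bar>b\<bar> else - \<bar>b\<bar>)"
  have s: "s \<noteq> 0" "s\<^sup>2 = b\<^sup>2" using b by (auto simp: s_def)
  then have "(b\<^sup>2 / s)\<^sup>2 = b\<^sup>2" using b by (simp add: power_divide power2_eq_square)
  moreover have "(s - t)\<^sup>2 \<le> b\<^sup>2"
    using False by (auto simp: s_def abs_le_square_iff[symmetric] abs_if)
  ultimately show ?thesis using s by (intro exI[of _ s]) auto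
qed

lemma spectrum_attainable_conj_pair:
  assumes l: "Im l \<noteq> 0"
  shows "spectrum_attainable 2 (2 * (cmod l)\<^sup>2) {#l, cnj l#}"
  unfolding spectrum_attainable_def
proof (intro ballI impI)
  fix B :: "real mat" assume B: "B \<in> carrier_mat 2 2" and T: "strictly_upper_triangular B"
  define a where "a = Re l"
  define b where "b = Im l"
  define t where "t = B $$ (0, 1)"
  obtain s where s: "s \<noteq> 0" and s_bound: "(s - t)\<^sup>2 + (b\<^sup>2 / s)\<^sup>2 \<le> 2 * b\<^sup>2"
    using off_diagonal_entry_choice l unfolding b_def by blast
  \<comment> \<open>makes B + E = [[a, s], [-b^2/s, a]], whose characteristic polynomial is (x - a)^2 + b^2\<close>
  define E where "E = mat 2 2 (\<lambda>(i, j). if i = j then a else if i = 0 then s - t else - (b\<^sup>2 / s))"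
  have B0: "B $$ (0, 0) = 0" "B $$ (1, 0) = 0" "B $$ (1, 1) = 0"
    using B T unfolding strictly_upper_triangular_def by auto
  let ?C = "map_mat complex_of_real (B + E)"
  have "char_poly ?C = [:- ?C $$ (0, 0), 1:] * [:- ?C $$ (1, 1), 1:] - [:?C $$ (1, 0) * ?C $$ (0, 1):]"
    by (rule char_poly_2x2) (use B in \<open>simp add: E_def\<close>)
  also have "\<dots> = [:- of_real a, 1:] * [:- of_real a, 1:] - [:- of_real (b\<^sup>2 / s) * of_real s:]"
    using B B0 by (simp add: E_def t_def)
  also have "\<dots> = [:- l, 1:] * [:- cnj l, 1:]"
    using s by (simp add: a_def b_def complex_eq_iff power2_eq_square algebra_simps)
  finally have "has_spectrum (B + E) {#l, cnj l#}" unfolding has_spectrum_def by simp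
  moreover have "(frob_norm E)\<^sup>2 = a\<^sup>2 + (s - t)\<^sup>2 + (b\<^sup>2 / s)\<^sup>2 + a\<^sup>2"
    unfolding power2_frob_norm by (simp add: E_def numeral_2_eq_2)
  moreover have "a\<^sup>2 + b\<^sup>2 = (cmod l)\<^sup>2" by (simp add: cmod_def a_def b_def)
  ultimately show "\<exists>E \<in> carrier_mat 2 2. (frob_norm E)\<^sup>2 \<le> 2 * (cmod l)\<^sup>2 \<and> has_spectrum (B + E) {#l, cnj l#}"
    using s_bound by (intro bexI[of _ E]) (auto simp: E_def)
qed

lemma spectrum_attainable_add:
  assumes L1: "spectrum_attainable k r1 L1" and L2: "spectrum_attainable m r2 L2"
  shows "spectrum_attainable (k + m) (r1 + r2) (L1 + L2)"
  unfolding spectrum_attainable_def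
proof (intro ballI impI)
  fix B :: "real mat" assume B: "B \<in> carrier_mat (k + m) (k + m)" and T: "strictly_upper_triangular B"
  obtain B1 B2 B3 B4 where split: "split_block B k k = (B1, B2, B3, B4)" by (metis prod_cases4)
  have blocks: "B1 \<in> carrier_mat k k" "B2 \<in> carrier_mat k m" "B4 \<in> carrier_mat m m"
    "B = four_block_mat B1 B2 B3 B4"
    using split_block[OF split, of m m] B by auto
  note T_blocks = strictly_upper_triangular_split_block[OF B T split]
  obtain E1 where E1: "E1 \<in> carrier_mat k k" "(frob_norm E1)\<^sup>2 \<le> r1" "has_spectrum (B1 + E1) L1"
    using spectrum_attainableD[OF L1 blocks(1) T_blocks(2)] .
  obtain E4 where E4: "E4 \<in> carrier_mat m m" "(frob_norm E4)\<^sup>2 \<le> r2" "has_spectrum (B4 + E4) L2"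
    using spectrum_attainableD[OF L2 blocks(3) T_blocks(3)] .
  define E where "E = four_block_mat E1 (0\<^sub>m k m) (0\<^sub>m m k) E4"
  have "B + E = four_block_mat (B1 + E1) B2 (0\<^sub>m m k) (B4 + E4)"
    unfolding E_def blocks(4) T_blocks(1) using blocks E1 E4
    by (subst add_four_block_mat[of _ k k _ m _ m]) auto
  then have "has_spectrum (B + E) (L1 + L2)"
    using has_spectrum_four_block[OF _ blocks(2) _ E1(3) E4(3)] blocks E1 E4 by simp
  moreover have "(frob_norm E)\<^sup>2 \<le> r1 + r2"
    unfolding E_def frob_norm_block_diag[OF E1(1) E4(1)] using E1 E4 by simp
  moreover have "E \<in> carrier_mat (k + m) (k + m)" unfolding E_def using E1 E4 by auto
  ultimately show "\<exists>E \<in> carrier_mat (k + m) (k + m). (frob_norm E)\<^sup>2 \<le> r1 + r2 \<and> has_spectrum (B + E) (L1 + L2)"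
    by blast
qed

lemma spectrum_attainable_cnj_closed:
  assumes "size \<Lambda> = n" and "image_mset cnj \<Lambda> = \<Lambda>"
  shows "spectrum_attainable n (\<Sum>z\<in>#\<Lambda>. (cmod z)\<^sup>2) \<Lambda>"
  using assms
proof (induction n arbitrary: \<Lambda> rule: less_induct)
  case (less n)
  show ?case
  proof (cases "\<Lambda> = {#}")
    case True
    then show ?thesis using less.prems spectrum_attainable_empty by simp
  next
    case False
    then obtain l L where \<Lambda>: "\<Lambda> = add_mset l L" by (metis multiset_cases)
    show ?thesis
    proof (cases "Im l = 0")
      case True
      then have "cnj l = l" by (simp add: complex_eq_iff)
      then have "image_mset cnj L = L" using less.prems(2) unfolding \<Lambda> by simp
      moreover have n: "n = 1 + size L" using less.prems(1) unfolding \<Lambda> by simp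
      ultimately have "spectrum_attainable (size L) (\<Sum>z\<in>#L. (cmod z)\<^sup>2) L"
        using less.IH[of "size L" L] by simp
      from spectrum_attainable_add[OF spectrum_attainable_real[OF True] this]
      show ?thesis unfolding \<Lambda> n by simp
    next
      case False
      have "cnj l \<in># \<Lambda>"
        using less.prems(2) unfolding \<Lambda> by (metis image_mset_add_mset union_single_eq_member)
      moreover have "cnj l \<noteq> l" using False by (simp add: complex_eq_iff)
      ultimately obtain L' where L: "L = add_mset (cnj l) L'"
        unfolding \<Lambda> by (metis insert_noteq_member multi_member_split)
      have "image_mset cnj L' = L'"
        using less.prems(2) unfolding \<Lambda> L by (simp add: add_mset_commute)
      moreover have n: "n = 2 + size L'" using less.prems(1) unfolding \<Lambda> L by simp
      ultimately have "spectrum_attainable (size L') (\<Sum>z\<in>#L'. (cmod z)\<^sup>2) L'"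
        using less.IH[of "size L'" L'] by simp
      from spectrum_attainable_add[OF spectrum_attainable_conj_pair[OF False] this]
      show ?thesis unfolding \<Lambda> L n by (simp add: add_mset_commute)
    qed
  qed
qed

theorem corollary5p5:
  fixes A :: "real mat" and n :: nat and \<epsilon> :: real
  assumes "A \<in> carrier_mat n n"
    and "nilpotent_mat A"
    and "\<epsilon> > 0"
  shows "\<forall>\<Lambda> :: complex multiset.
           size \<Lambda> = n \<and> image_mset cnj \<Lambda> = \<Lambda> \<and>
           (\<Sum>z\<in>#\<Lambda>. (cmod z)^2) < \<epsilon>^2 \<longrightarrow>
           (\<exists>M \<in> carrier_mat n n. frob_norm (M - A) < \<epsilon> \<and> has_spectrum M \<Lambda>)"
proof (intro allI impI)
  fix \<Lambda> :: "complex multiset"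
  assume "size \<Lambda> = n \<and> image_mset cnj \<Lambda> = \<Lambda> \<and> (\<Sum>z\<in>#\<Lambda>. (cmod z)^2) < \<epsilon>^2"
  then have size: "size \<Lambda> = n" and cnj: "image_mset cnj \<Lambda> = \<Lambda>"
    and small: "(\<Sum>z\<in>#\<Lambda>. (cmod z)^2) < \<epsilon>^2" by auto
  obtain Q where Q: "orthogonal_mat Q n"
    and T: "strictly_upper_triangular (transpose_mat Q * A * Q)"
    using orthogonal_strict_triangularization[OF assms(1) char_poly_nilpotent[OF assms(1,2)]] by blast
  have Q_carrier: "Q \<in> carrier_mat n n" using Q unfolding orthogonal_mat_def by simp
  have T_carrier: "transpose_mat Q * A * Q \<in> carrier_mat n n" using Q_carrier assms(1) by simp
  obtain E where E: "E \<in> carrier_mat n n" and E_small: "(frob_norm E)^2 \<le> (\<Sum>z\<in>#\<Lambda>. (cmod z)^2)"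
    and spectrum: "has_spectrum (transpose_mat Q * A * Q + E) \<Lambda>"
    using spectrum_attainableD[OF spectrum_attainable_cnj_closed[OF size cnj] T_carrier T] .
  have TE: "transpose_mat Q * A * Q + E \<in> carrier_mat n n" using T_carrier E by simp
  define M where "M = Q * (transpose_mat Q * A * Q + E) * transpose_mat Q"
  have "M - A = Q * E * transpose_mat Q"
    unfolding M_def by (rule orthogonal_conj_perturbation[OF Q assms(1) E])
  then have "frob_norm (M - A) = frob_norm E"
    using frob_norm_orthogonal_conj[OF Q E] by (simp only:)
  also have "\<dots> < \<epsilon>"
    by (rule power2_less_imp_less) (use E_small small assms(3) in auto)
  finally have "frob_norm (M - A) < \<epsilon>" .
  moreover have "has_spectrum M \<Lambda>"
    unfolding M_def by (rule has_spectrum_orthogonal_conj[OF Q TE spectrum])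
  moreover have "M \<in> carrier_mat n n" unfolding M_def using Q_carrier TE by simp
  ultimately show "\<exists>M \<in> carrier_mat n n. frob_norm (M - A) < \<epsilon> \<and> has_spectrum M \<Lambda>" by auto
qed

end
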